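(* Let $\mathcal{L}^-\subseteq\mathcal{L}$ be languages with $\mathcal{L}\setminus\mathcal{L}^-$ relational. Let $\mathbb{K}$ be an age in $\mathcal{L}$ such that both $\mathbb{K}$ and $\mathbb{K}\restriction\mathcal{L}^-$ are strong Fraïssé classes, let $\kappa$ be an infinite cardinal, and let $M^-$ be an $\mathcal{L}^-$-structure with $M^-\models \mathrm{Fr}_\kappa(\mathbb{K}\restriction\mathcal{L}^-)$. Suppose $\lambda\le \mathrm{cf}(\kappa)$ and $\mathbb{K}$ is closed under less than $\lambda$-unions. Then the partial order $\mathrm{Fn}^{M^-}_{\mathbb{K}}(\kappa)$ is $\lambda$-closed, i.e. for every $\gamma<\lambda$ and every sequence $\langle \mathcal{A}_i : i<\gamma\rangle$ of elements of $\mathrm{Fn}^{M^-}_{\mathbb{K}}(\kappa)$ with $\mathcal{A}_i\subseteq\mathcal{A}_j$ for $i<j<\gamma$, there is $\mathcal{B}\in\mathrm{Fn}^{M^-}_{\mathbb{K}}(\kappa)$ with $\mathcal{A}_i\subseteq\mathcal{B}$ for all $i<\gamma$.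
   Context: Languages may be many-sorted. For an $\mathcal{L}$-structure $\mathcal{M}$ and a set $A$ of its elements, the substructure generated by $A$ is the smallest substructure of $\mathcal{M}$ containing $A$ (closure of $A$ under all terms). $\mathcal{M}$ is $<\lambda$-generated if it is generated by a set of size $<\lambda$; for a tuple $\mathbf{a}$, "$\mathbf{a}$ generates $\mathcal{A}$" means the set of its entries does. An age in $\mathcal{L}$ is a class of $\mathcal{L}$-structures closed under isomorphism. For an age $\mathbb{K}$: $\mathbb{K}_\kappa$ is the class of elements of $\mathbb{K}$ that are $<\kappa$-generated; for $\mathcal{L}^-\subseteq\mathcal{L}$, $\mathbb{K}\restriction\mathcal{L}^-=\{\mathcal{A}\restriction\mathcal{L}^-:\mathcal{A}\in\mathbb{K}\}$. $\mathbb{K}$ has HP if it is closed under substructures; JEP if any two members embed in a common member; AP if for embeddings $i_1:\mathcal{A}_0\to\mathcal{A}_1$, $i_2:\mathcal{A}_0\to\mathcal{A}_2$ in $\mathbb{K}$ there are $\mathcal{A}_3\in\mathbb{K}$ and embeddings $j_1:\mathcal{A}_1\to\mathcal{A}_3$, $j_2:\mathcal{A}_2\to\mathcal{A}_3$ with $j_1\circ i_1=j_2\circ i_2$; SAP if moreover one can always choose these with $j_1[\mathcal{A}_1]\cap j_2[\mathcal{A}_2]=(j_1\circ i_1)[\mathcal{A}_0]$. A Fraïssé class is an age with HP, JEP, AP; a strong Fraïssé class is a Fraïssé class with SAP. $\mathbb{K}$ is closed under less than $\lambda$-unions if for every $\gamma<\lambda$ and every chain $(\mathcal{A}_i)_{i<\gamma}$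 in $\mathbb{K}$ with $\mathcal{A}_i\subseteq\mathcal{A}_j$ for $i<j$, $\bigcup_{i<\gamma}\mathcal{A}_i\in\mathbb{K}$. For an $\mathcal{L}$-structure $\mathcal{A}$ and tuple $\mathbf{a}$ in it, $\mathrm{qftp}^{\mathcal{A}}(\mathbf{a})(\mathbf{x})$ is the set of literals in variables $\mathbf{x}$ satisfied by $\mathbf{a}$ in $\mathcal{A}$. $\mathrm{Fr}_\kappa(\mathbb{K})\subseteq\mathcal{L}_{\infty\kappa}(\mathcal{L})$ is the theory with axioms: (a) for all $\mathcal{A}\in\mathbb{K}$ and tuples $\mathbf{a}$ generating $\mathcal{A}$: $(\exists\mathbf{x})\bigwedge\mathrm{qftp}^{\mathcal{A}}(\mathbf{a})(\mathbf{x})$; (b) for all $\mathcal{A},\mathcal{B}\in\mathbb{K}$ with $\mathcal{A}\subseteq\mathcal{B}$, $\mathbf{a}$ generating $\mathcal{A}$ and $\mathbf{b}$ generating $\mathcal{B}$: $(\forall\mathbf{x})[\bigwedge\mathrm{qftp}^{\mathcal{A}}(\mathbf{a})(\mathbf{x})\to(\exists\mathbf{y})\bigwedge\mathrm{qftp}^{\mathcal{B}}(\mathbf{a}\mathbf{b})(\mathbf{x}\mathbf{y})]$. For an $\mathcal{L}^-$-structure $M^-$, $\mathbb{K}[M^-]=\{\mathcal{A}\in\mathbb{K}:\mathcal{A}\restriction\mathcal{L}^-\text{ is a substructure of }M^-\}$. $\mathrm{Fn}^{M^-}_{\mathbb{K}}(\kappa)$ is the partial order whose elements are the structures in $\mathbb{K}_\kappa[M^-]$,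 ordered by $\mathcal{M}\le\mathcal{N}$ iff $\mathcal{N}\subseteq\mathcal{M}$ (substructure). *)

theory Defs
  imports Main
begin

record ('s, 'f, 'r) lang =
  lsorts :: "'s set"
  lfuns  :: "'f set"
  lrels  :: "'r set"
  farity :: "'f \<Rightarrow> 's list"
  fsort  :: "'f \<Rightarrow> 's"
  rarity :: "'r \<Rightarrow> 's list"

definition lang_wf :: "('s, 'f, 'r) lang \<Rightarrow> bool" where
  "lang_wf L \<longleftrightarrow>
     (\<forall>f\<in>lfuns L. set (farity L f) \<subseteq> lsorts L \<and> fsort L f \<in> lsorts L) \<and>
     (\<forall>r\<in>lrels L. set (rarity L r) \<subseteq> lsorts L)"

definition relational_expansion :: "('s, 'f, 'r) lang \<Rightarrow> ('s, 'f, 'r) lang \<Rightarrow> bool" where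
  "relational_expansion Lm L \<longleftrightarrow>
     lsorts Lm = lsorts L \<and> lfuns Lm = lfuns L \<and> farity Lm = farity L \<and>
     fsort Lm = fsort L \<and> rarity Lm = rarity L \<and> lrels Lm \<subseteq> lrels L"

record ('s, 'f, 'r, 'u) struc =
  sdom :: "'s \<Rightarrow> 'u set"
  fint :: "'f \<Rightarrow> 'u list \<Rightarrow> 'u"
  rint :: "'r \<Rightarrow> 'u list set"

definition elems :: "('s, 'f, 'r) lang \<Rightarrow> ('s, 'f, 'r, 'u) struc \<Rightarrow> 'u set" where
  "elems L A = (\<Union>s\<in>lsorts L. sdom A s)"

definition args_in :: "('s, 'f, 'r, 'u) struc \<Rightarrow> 's list \<Rightarrow> 'u list \<Rightarrow> bool" where
  "args_in A ss xs \<longleftrightarrow> length xs = length ss \<and> (\<forall>i<length xs. xs ! i \<in> sdom A (ss ! i))"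

definition is_struc :: "('s, 'f, 'r) lang \<Rightarrow> ('s, 'f, 'r, 'u) struc \<Rightarrow> bool" where
  "is_struc L A \<longleftrightarrow>
     (\<forall>s\<in>lsorts L. \<forall>t\<in>lsorts L. s \<noteq> t \<longrightarrow> sdom A s \<inter> sdom A t = {}) \<and>
     (\<forall>f\<in>lfuns L. \<forall>xs. args_in A (farity L f) xs \<longrightarrow> fint A f xs \<in> sdom A (fsort L f)) \<and>
     (\<forall>r\<in>lrels L. \<forall>xs\<in>rint A r. args_in A (rarity L r) xs)"

definition substruc :: "('s, 'f, 'r) lang \<Rightarrow> ('s, 'f, 'r, 'u) struc \<Rightarrow> ('s, 'f, 'r, 'u) struc \<Rightarrow> bool" where
  "substruc L A B \<longleftrightarrow> is_struc L A \<and> is_struc L B \<and>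
     (\<forall>s\<in>lsorts L. sdom A s \<subseteq> sdom B s) \<and>
     (\<forall>f\<in>lfuns L. \<forall>xs. args_in A (farity L f) xs \<longrightarrow> fint A f xs = fint B f xs) \<and>
     (\<forall>r\<in>lrels L. \<forall>xs. args_in A (rarity L r) xs \<longrightarrow> (xs \<in> rint A r \<longleftrightarrow> xs \<in> rint B r))"

definition embedding :: "('s, 'f, 'r) lang \<Rightarrow> ('u \<Rightarrow> 'u) \<Rightarrow> ('s, 'f, 'r, 'u) struc \<Rightarrow> ('s, 'f, 'r, 'u) struc \<Rightarrow> bool" where
  "embedding L h A B \<longleftrightarrow> is_struc L A \<and> is_struc L B \<and>
     (\<forall>s\<in>lsorts L. h ` sdom A s \<subseteq> sdom B s) \<and>
     inj_on h (elems L A) \<and>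
     (\<forall>f\<in>lfuns L. \<forall>xs. args_in A (farity L f) xs \<longrightarrow> h (fint A f xs) = fint B f (map h xs)) \<and>
     (\<forall>r\<in>lrels L. \<forall>xs. args_in A (rarity L r) xs \<longrightarrow> (xs \<in> rint A r \<longleftrightarrow> map h xs \<in> rint B r))"

definition isomorphism :: "('s, 'f, 'r) lang \<Rightarrow> ('u \<Rightarrow> 'u) \<Rightarrow> ('s, 'f, 'r, 'u) struc \<Rightarrow> ('s, 'f, 'r, 'u) struc \<Rightarrow> bool" where
  "isomorphism L h A B \<longleftrightarrow> embedding L h A B \<and> (\<forall>s\<in>lsorts L. h ` sdom A s = sdom B s)"

definition reduct :: "('s, 'f, 'r) lang \<Rightarrow> ('s, 'f, 'r, 'u) struc \<Rightarrow> ('s, 'f, 'r, 'u) struc" where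
  "reduct Lm A = A\<lparr>rint := (\<lambda>r. if r \<in> lrels Lm then rint A r else {})\<rparr>"

inductive_set gen_closure :: "('s, 'f, 'r) lang \<Rightarrow> ('s, 'f, 'r, 'u) struc \<Rightarrow> 'u set \<Rightarrow> 'u set"
  for L A X where
  base: "x \<in> X \<Longrightarrow> x \<in> gen_closure L A X"
| app: "f \<in> lfuns L \<Longrightarrow> args_in A (farity L f) xs \<Longrightarrow> \<forall>x\<in>set xs. x \<in> gen_closure L A X
          \<Longrightarrow> fint A f xs \<in> gen_closure L A X"

definition generated_by :: "('s, 'f, 'r) lang \<Rightarrow> ('s, 'f, 'r, 'u) struc \<Rightarrow> 'u set \<Rightarrow> bool" where
  "generated_by L A X \<longleftrightarrow> X \<subseteq> elems L A \<and> elems L A = gen_closure L A X"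

definition lt_generated :: "('s, 'f, 'r) lang \<Rightarrow> 'k rel \<Rightarrow> ('s, 'f, 'r, 'u) struc \<Rightarrow> bool" where
  "lt_generated L \<kappa> A \<longleftrightarrow> (\<exists>X. ordLess2 (card_of X) \<kappa> \<and> generated_by L A X)"

definition age :: "('s, 'f, 'r) lang \<Rightarrow> ('s, 'f, 'r, 'u) struc set \<Rightarrow> bool" where
  "age L K \<longleftrightarrow> (\<forall>A\<in>K. is_struc L A) \<and> (\<forall>A B h. A \<in> K \<longrightarrow> isomorphism L h A B \<longrightarrow> B \<in> K)"

definition lt_gen_class :: "('s, 'f, 'r) lang \<Rightarrow> 'k rel \<Rightarrow> ('s, 'f, 'r, 'u) struc set \<Rightarrow> ('s, 'f, 'r, 'u) struc set" where
  "lt_gen_class L \<kappa> K = {A \<in> K. lt_generated L \<kappa> A}"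

text \<open>K restricted to Lm, as an age (i.e. closed under Lm-isomorphism).\<close>
definition restr_class :: "('s, 'f, 'r) lang \<Rightarrow> ('s, 'f, 'r, 'u) struc set \<Rightarrow> ('s, 'f, 'r, 'u) struc set" where
  "restr_class Lm K = {B. is_struc Lm B \<and> (\<exists>A\<in>K. \<exists>h. isomorphism Lm h (reduct Lm A) B)}"

definition HP :: "('s, 'f, 'r) lang \<Rightarrow> ('s, 'f, 'r, 'u) struc set \<Rightarrow> bool" where
  "HP L K \<longleftrightarrow> (\<forall>A B. B \<in> K \<longrightarrow> substruc L A B \<longrightarrow> A \<in> K)"

definition JEP :: "('s, 'f, 'r) lang \<Rightarrow> ('s, 'f, 'r, 'u) struc set \<Rightarrow> bool" where
  "JEP L K \<longleftrightarrow> (\<forall>A\<in>K. \<forall>B\<in>K. \<exists>C\<in>K. \<exists>f g. embedding L f A C \<and> embedding L g B C)"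

definition AP :: "('s, 'f, 'r) lang \<Rightarrow> ('s, 'f, 'r, 'u) struc set \<Rightarrow> bool" where
  "AP L K \<longleftrightarrow> (\<forall>A0\<in>K. \<forall>A1\<in>K. \<forall>A2\<in>K. \<forall>i1 i2.
      embedding L i1 A0 A1 \<longrightarrow> embedding L i2 A0 A2 \<longrightarrow>
      (\<exists>A3\<in>K. \<exists>j1 j2. embedding L j1 A1 A3 \<and> embedding L j2 A2 A3 \<and>
         (\<forall>x\<in>elems L A0. j1 (i1 x) = j2 (i2 x))))"

definition SAP :: "('s, 'f, 'r) lang \<Rightarrow> ('s, 'f, 'r, 'u) struc set \<Rightarrow> bool" where
  "SAP L K \<longleftrightarrow> (\<forall>A0\<in>K. \<forall>A1\<in>K. \<forall>A2\<in>K. \<forall>i1 i2.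
      embedding L i1 A0 A1 \<longrightarrow> embedding L i2 A0 A2 \<longrightarrow>
      (\<exists>A3\<in>K. \<exists>j1 j2. embedding L j1 A1 A3 \<and> embedding L j2 A2 A3 \<and>
         (\<forall>x\<in>elems L A0. j1 (i1 x) = j2 (i2 x)) \<and>
         j1 ` elems L A1 \<inter> j2 ` elems L A2 = (j1 \<circ> i1) ` elems L A0))"

definition fraisse_class :: "('s, 'f, 'r) lang \<Rightarrow> ('s, 'f, 'r, 'u) struc set \<Rightarrow> bool" where
  "fraisse_class L K \<longleftrightarrow> age L K \<and> HP L K \<and> JEP L K \<and> AP L K"

definition strong_fraisse_class :: "('s, 'f, 'r) lang \<Rightarrow> ('s, 'f, 'r, 'u) struc set \<Rightarrow> bool" where
  "strong_fraisse_class L K \<longleftrightarrow> fraisse_class L K \<and> SAP L K"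

definition infinite_cardinal :: "'k rel \<Rightarrow> bool" where
  "infinite_cardinal \<kappa> \<longleftrightarrow> Card_order \<kappa> \<and> infinite (Field \<kappa>)"

text \<open>lambda <= cf(kappa): every cofinal subset of kappa has cardinality at least lambda.\<close>
definition le_cofinality :: "'l rel \<Rightarrow> 'k rel \<Rightarrow> bool" where
  "le_cofinality lam \<kappa> \<longleftrightarrow>
     (\<forall>S. S \<subseteq> Field \<kappa> \<and> (\<forall>a\<in>Field \<kappa>. \<exists>b\<in>S. (a, b) \<in> \<kappa>) \<longrightarrow> ordLeq2 lam (card_of S))"

definition is_chain :: "('s, 'f, 'r) lang \<Rightarrow> 'g rel \<Rightarrow> ('g \<Rightarrow> ('s, 'f, 'r, 'u) struc) \<Rightarrow> bool" where
  "is_chain L \<gamma> A \<longleftrightarrow> (\<forall>i j. (i, j) \<in> \<gamma> \<and> i \<noteq> j \<longrightarrow> substruc L (A i) (A j))"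

definition chain_union :: "('s, 'f, 'r) lang \<Rightarrow> 'g set \<Rightarrow> ('g \<Rightarrow> ('s, 'f, 'r, 'u) struc) \<Rightarrow> ('s, 'f, 'r, 'u) struc" where
  "chain_union L I A =
     \<lparr> sdom = (\<lambda>s. \<Union>i\<in>I. sdom (A i) s),
       fint = (\<lambda>f xs. fint (A (SOME i. i \<in> I \<and> args_in (A i) (farity L f) xs)) f xs),
       rint = (\<lambda>r. \<Union>i\<in>I. rint (A i) r) \<rparr>"

text \<open>Closed under less than lambda-unions; ordinals gamma < lambda are represented as
  well-orders gamma on the type of lambda with gamma <o lambda.\<close>
definition closed_lt_unions :: "('s, 'f, 'r) lang \<Rightarrow> 'l rel \<Rightarrow> ('s, 'f, 'r, 'u) struc set \<Rightarrow> bool" where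
  "closed_lt_unions L lam K \<longleftrightarrow>
     (\<forall>(\<gamma>::'l rel) A. Well_order \<gamma> \<and> ordLess2 \<gamma> lam \<and> (\<forall>i\<in>Field \<gamma>. A i \<in> K) \<and> is_chain L \<gamma> A
        \<longrightarrow> chain_union L (Field \<gamma>) A \<in> K)"

datatype ('f, 'v) trm = Var 'v | App 'f "('f, 'v) trm list"

inductive trm_sorted :: "('s, 'f, 'r) lang \<Rightarrow> ('v \<Rightarrow> 's) \<Rightarrow> 'v set \<Rightarrow> ('f, 'v) trm \<Rightarrow> 's \<Rightarrow> bool"
  for L \<sigma> J where
  var: "v \<in> J \<Longrightarrow> trm_sorted L \<sigma> J (Var v) (\<sigma> v)"
| app: "f \<in> lfuns L \<Longrightarrow> list_all2 (trm_sorted L \<sigma> J) ts (farity L f)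
          \<Longrightarrow> trm_sorted L \<sigma> J (App f ts) (fsort L f)"

fun eval :: "('s, 'f, 'r, 'u) struc \<Rightarrow> ('v \<Rightarrow> 'u) \<Rightarrow> ('f, 'v) trm \<Rightarrow> 'u" where
  "eval A a (Var v) = a v"
| "eval A a (App f ts) = fint A f (map (eval A a) ts)"

datatype ('f, 'r, 'v) atomic = Eq "('f, 'v) trm" "('f, 'v) trm" | Rel 'r "('f, 'v) trm list"

fun atomic_wf :: "('s, 'f, 'r) lang \<Rightarrow> ('v \<Rightarrow> 's) \<Rightarrow> 'v set \<Rightarrow> ('f, 'r, 'v) atomic \<Rightarrow> bool" where
  "atomic_wf L \<sigma> J (Eq t1 t2) \<longleftrightarrow> (\<exists>s. trm_sorted L \<sigma> J t1 s \<and> trm_sorted L \<sigma> J t2 s)"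
| "atomic_wf L \<sigma> J (Rel r ts) \<longleftrightarrow> r \<in> lrels L \<and> list_all2 (trm_sorted L \<sigma> J) ts (rarity L r)"

fun holds :: "('s, 'f, 'r, 'u) struc \<Rightarrow> ('v \<Rightarrow> 'u) \<Rightarrow> ('f, 'r, 'v) atomic \<Rightarrow> bool" where
  "holds A a (Eq t1 t2) \<longleftrightarrow> eval A a t1 = eval A a t2"
| "holds A a (Rel r ts) \<longleftrightarrow> map (eval A a) ts \<in> rint A r"

definition sort_of :: "('s, 'f, 'r) lang \<Rightarrow> ('s, 'f, 'r, 'u) struc \<Rightarrow> 'u \<Rightarrow> 's" where
  "sort_of L A x = (SOME s. s \<in> lsorts L \<and> x \<in> sdom A s)"

text \<open>m (a tuple in M indexed by J, with variables sorted like a) satisfies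
  the conjunction of qftp^A(a)(x), i.e. every literal (atomic formula or its negation)
  in the variables x_j (j in J) true of a in A is true of m in M.\<close>
definition realizes :: "('s, 'f, 'r) lang \<Rightarrow> 'v set \<Rightarrow> ('s, 'f, 'r, 'u) struc \<Rightarrow> ('v \<Rightarrow> 'u)
    \<Rightarrow> ('s, 'f, 'r, 'u) struc \<Rightarrow> ('v \<Rightarrow> 'u) \<Rightarrow> bool" where
  "realizes L J A a M m \<longleftrightarrow>
     (\<forall>v\<in>J. m v \<in> sdom M (sort_of L A (a v))) \<and>
     (\<forall>\<phi>. atomic_wf L (\<lambda>v. sort_of L A (a v)) J \<phi> \<longrightarrow> (holds A a \<phi> \<longleftrightarrow> holds M m \<phi>))"

text \<open>M satisfies Fr_kappa(K). Tuples of length < kappa are indexed by subsets J of the type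
  of kappa with |J| <o kappa; the concatenation xy is indexed by the disjoint sum.\<close>
definition models_Fr :: "('s, 'f, 'r) lang \<Rightarrow> 'k rel \<Rightarrow> ('s, 'f, 'r, 'u) struc set
    \<Rightarrow> ('s, 'f, 'r, 'u) struc \<Rightarrow> bool" where
  "models_Fr L \<kappa> K M \<longleftrightarrow>
     (\<forall>A\<in>K. \<forall>(J::'k set) a. ordLess2 (card_of J) \<kappa> \<and> generated_by L A (a ` J)
        \<longrightarrow> (\<exists>m. realizes L J A a M m)) \<and>
     (\<forall>A\<in>K. \<forall>B\<in>K. \<forall>(J1::'k set) (J2::'k set) a b.
        substruc L A B \<and> ordLess2 (card_of J1) \<kappa> \<and> ordLess2 (card_of J2) \<kappa> \<and>
        generated_by L A (a ` J1) \<and> generated_by L B (b ` J2)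
        \<longrightarrow> (\<forall>m. realizes L J1 A a M m \<longrightarrow>
               (\<exists>n. realizes L (Inl ` J1 \<union> Inr ` J2) B (case_sum a b) M (case_sum m n))))"

definition over :: "('s, 'f, 'r) lang \<Rightarrow> ('s, 'f, 'r, 'u) struc set \<Rightarrow> ('s, 'f, 'r, 'u) struc
    \<Rightarrow> ('s, 'f, 'r, 'u) struc set" where
  "over Lm K M = {A \<in> K. substruc Lm (reduct Lm A) M}"

definition Fn :: "('s, 'f, 'r) lang \<Rightarrow> ('s, 'f, 'r) lang \<Rightarrow> ('s, 'f, 'r, 'u) struc set
    \<Rightarrow> ('s, 'f, 'r, 'u) struc \<Rightarrow> 'k rel \<Rightarrow> ('s, 'f, 'r, 'u) struc set" where
  "Fn L Lm K M \<kappa> = over Lm (lt_gen_class L \<kappa> K) M"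

definition Fn_le :: "('s, 'f, 'r) lang \<Rightarrow> ('s, 'f, 'r, 'u) struc \<Rightarrow> ('s, 'f, 'r, 'u) struc \<Rightarrow> bool" where
  "Fn_le L A B \<longleftrightarrow> substruc L B A"

end

theory Submission
  imports Defs
begin

(* The union U of a chain of conditions of length less than \<lambda> is again a condition.
  It lies in K by closure under unions; it is generated by the union of generating sets
  of the members, which has size < \<kappa> because fewer than \<lambda> \<le> cf \<kappa> sets of size < \<kappa> are
  bounded below \<kappa>; and its L^- reduct is the union of a chain of substructures of M^-,
  hence a substructure of M^-. For the empty chain U is the empty structure: it has no
  constants, and axiom (a) of Fr_\<kappa> for the empty tuple makes M^- agree with it on
  0-ary relation symbols. *)

definition substruc_chain :: "('s, 'f, 'r) lang \<Rightarrow> 'i set \<Rightarrow> ('i \<Rightarrow> ('s, 'f, 'r, 'u) struc) \<Rightarrow> bool" where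
  "substruc_chain L I A \<longleftrightarrow>
     (\<forall>i\<in>I. \<forall>j\<in>I. i = j \<or> substruc L (A i) (A j) \<or> substruc L (A j) (A i))"

lemma substruc_chain_Field:
  assumes "Well_order \<gamma>" "is_chain L \<gamma> A"
  shows "substruc_chain L (Field \<gamma>) A"
proof -
  have "Total \<gamma>" using assms(1) by (simp add: well_order_on_def linear_order_on_def)
  then show ?thesis
    using assms(2) unfolding substruc_chain_def is_chain_def total_on_def by blast
qed

lemma args_in_mono:
  assumes "args_in A ss xs" "\<forall>s\<in>set ss. sdom A s \<subseteq> sdom B s"
  shows "args_in B ss xs"
  using assms unfolding args_in_def by (metis nth_mem subsetD)

lemma args_in_Cons: "args_in A (s # ss) (x # xs) \<longleftrightarrow> x \<in> sdom A s \<and> args_in A ss xs"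
  unfolding args_in_def by (auto simp: nth_Cons split: nat.splits)

lemma args_in_substruc:
  assumes "substruc L A B" "set ss \<subseteq> lsorts L" "args_in A ss xs"
  shows "args_in B ss xs"
  using assms args_in_mono unfolding substruc_def by blast

lemma sdom_chain_union: "sdom (chain_union L I A) s = (\<Union>i\<in>I. sdom (A i) s)"
  by (simp add: chain_union_def)

lemma rint_chain_union: "rint (chain_union L I A) r = (\<Union>i\<in>I. rint (A i) r)"
  by (simp add: chain_union_def)

lemma args_in_chain_union:
  assumes "substruc_chain L I A" "I \<noteq> {}" "set ss \<subseteq> lsorts L"
    and "args_in (chain_union L I A) ss xs"
  obtains j where "j \<in> I" "args_in (A j) ss xs"
proof -
  have "\<exists>j\<in>I. args_in (A j) ss xs"
    using assms(3,4)
  proof (induction xs arbitrary: ss)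
    case Nil
    then show ?case using assms(2) by (auto simp: args_in_def)
  next
    case (Cons x xs)
    then obtain s ss' where ss: "ss = s # ss'"
      by (cases ss) (auto simp: args_in_def)
    with Cons.prems obtain i where i: "i \<in> I" "x \<in> sdom (A i) s"
      and tail: "args_in (chain_union L I A) ss' xs"
      by (auto simp: args_in_Cons sdom_chain_union)
    from Cons.IH[OF _ tail] Cons.prems(1) ss obtain j where j: "j \<in> I" "args_in (A j) ss' xs"
      by auto
    have sorts: "s \<in> lsorts L" "set ss' \<subseteq> lsorts L" using Cons.prems(1) ss by auto
    from assms(1) i(1) j(1) consider "substruc L (A i) (A j)" | "substruc L (A j) (A i)" | "i = j"
      unfolding substruc_chain_def by blast
    then show ?case
    proof cases
      case 1
      then have "x \<in> sdom (A j) s" using i(2) sorts(1) unfolding substruc_def by blast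
      then show ?thesis using j ss by (auto simp: args_in_Cons)
    next
      case 2
      then have "args_in (A i) ss' xs" using args_in_substruc j(2) sorts(2) by blast
      then show ?thesis using i ss by (auto simp: args_in_Cons)
    qed (use i j ss in \<open>auto simp: args_in_Cons\<close>)
  qed
  then show thesis using that by blast
qed

lemma fint_chain_union:
  assumes "substruc_chain L I A" "f \<in> lfuns L" "i \<in> I" "args_in (A i) (farity L f) xs"
  shows "fint (chain_union L I A) f xs = fint (A i) f xs"
proof -
  define j where "j = (SOME j. j \<in> I \<and> args_in (A j) (farity L f) xs)"
  have j: "j \<in> I" "args_in (A j) (farity L f) xs"
    using someI[of "\<lambda>j. j \<in> I \<and> args_in (A j) (farity L f) xs", OF conjI[OF assms(3,4)]]
    unfolding j_def by auto
  have "fint (chain_union L I A) f xs = fint (A j) f xs"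
    unfolding chain_union_def j_def by simp
  also have "\<dots> = fint (A i) f xs"
    using assms j unfolding substruc_chain_def substruc_def by metis
  finally show ?thesis .
qed

lemma substruc_chain_union:
  assumes "substruc_chain L I A" "\<forall>i\<in>I. is_struc L (A i)" "is_struc L (chain_union L I A)"
    and "i \<in> I"
  shows "substruc L (A i) (chain_union L I A)"
  unfolding substruc_def
proof (intro conjI ballI allI impI)
  show "is_struc L (A i)" using assms(2,4) by blast
  show "sdom (A i) s \<subseteq> sdom (chain_union L I A) s" for s
    using assms(4) by (auto simp: sdom_chain_union)
  show "fint (A i) f xs = fint (chain_union L I A) f xs"
    if "f \<in> lfuns L" "args_in (A i) (farity L f) xs" for f xs
    using fint_chain_union[OF assms(1) that(1) assms(4) that(2)] by simp
  show "xs \<in> rint (A i) r \<longleftrightarrow> xs \<in> rint (chain_union L I A) r"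
    if r: "r \<in> lrels L" "args_in (A i) (rarity L r) xs" for r xs
  proof
    assume "xs \<in> rint (chain_union L I A) r"
    then obtain j where j: "j \<in> I" "xs \<in> rint (A j) r" by (auto simp: rint_chain_union)
    have "args_in (A j) (rarity L r) xs" using assms(2) j(1) r(1) j(2) unfolding is_struc_def by blast
    moreover from assms(1,4) j(1) consider "substruc L (A i) (A j)" | "substruc L (A j) (A i)" | "i = j"
      unfolding substruc_chain_def by blast
    ultimately show "xs \<in> rint (A i) r"
      using j(2) r unfolding substruc_def by metis
  qed (use assms(4) in \<open>auto simp: rint_chain_union\<close>)
qed (use assms(3) in auto)

lemma chain_union_substruc:
  assumes "lang_wf L" "substruc_chain L I A" "I \<noteq> {}" "is_struc L (chain_union L I A)"
    and "\<forall>i\<in>I. substruc L (A i) M"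
  shows "substruc L (chain_union L I A) M"
  unfolding substruc_def
proof (intro conjI ballI allI impI)
  let ?U = "chain_union L I A"
  have A: "\<forall>i\<in>I. is_struc L (A i)" and M: "is_struc L M"
    using assms(3,5) unfolding substruc_def by auto
  show "is_struc L M" by (fact M)
  show "sdom ?U s \<subseteq> sdom M s" if "s \<in> lsorts L" for s
    using assms(5) that unfolding substruc_def by (fastforce simp: sdom_chain_union)
  show "fint ?U f xs = fint M f xs" if f: "f \<in> lfuns L" "args_in ?U (farity L f) xs" for f xs
  proof -
    have "set (farity L f) \<subseteq> lsorts L" using assms(1) f(1) unfolding lang_wf_def by blast
    then obtain j where j: "j \<in> I" "args_in (A j) (farity L f) xs"
      using args_in_chain_union[OF assms(2,3) _ f(2)] by blast
    have "fint ?U f xs = fint (A j) f xs" using fint_chain_union[OF assms(2) f(1) j] .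
    also have "\<dots> = fint M f xs" using assms(5) j f(1) unfolding substruc_def by blast
    finally show ?thesis .
  qed
  show "xs \<in> rint ?U r \<longleftrightarrow> xs \<in> rint M r" if r: "r \<in> lrels L" "args_in ?U (rarity L r) xs" for r xs
  proof -
    have "set (rarity L r) \<subseteq> lsorts L" using assms(1) r(1) unfolding lang_wf_def by blast
    then obtain j where j: "j \<in> I" "args_in (A j) (rarity L r) xs"
      using args_in_chain_union[OF assms(2,3) _ r(2)] by blast
    have "xs \<in> rint ?U r \<longleftrightarrow> xs \<in> rint (A j) r"
      using substruc_chain_union[OF assms(2) A assms(4) j(1)] r(1) j(2) unfolding substruc_def by blast
    also have "\<dots> \<longleftrightarrow> xs \<in> rint M r" using assms(5) j r(1) unfolding substruc_def by blast
    finally show ?thesis .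
  qed
qed fact

lemma reduct_simps [simp]:
  "sdom (reduct Lm A) = sdom A" "fint (reduct Lm A) = fint A"
  "rint (reduct Lm A) r = (if r \<in> lrels Lm then rint A r else {})"
  by (auto simp: reduct_def)

lemma args_in_reduct [simp]: "args_in (reduct Lm A) ss xs \<longleftrightarrow> args_in A ss xs"
  by (simp add: args_in_def)

lemma lang_wf_relational_expansion:
  assumes "lang_wf L" "relational_expansion Lm L"
  shows "lang_wf Lm"
  using assms unfolding lang_wf_def relational_expansion_def by auto

lemma is_struc_reduct:
  assumes "relational_expansion Lm L" "is_struc L A"
  shows "is_struc Lm (reduct Lm A)"
  using assms unfolding is_struc_def relational_expansion_def by auto

lemma substruc_reduct:
  assumes "relational_expansion Lm L" "substruc L A B"
  shows "substruc Lm (reduct Lm A) (reduct Lm B)"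
  using assms is_struc_reduct[OF assms(1)]
  unfolding substruc_def relational_expansion_def by (auto simp: subset_iff)

lemma substruc_chain_reduct:
  assumes "relational_expansion Lm L" "substruc_chain L I A"
  shows "substruc_chain Lm I (\<lambda>i. reduct Lm (A i))"
  using assms substruc_reduct unfolding substruc_chain_def by metis

lemma reduct_chain_union:
  assumes "relational_expansion Lm L"
  shows "reduct Lm (chain_union L I A) = chain_union Lm I (\<lambda>i. reduct Lm (A i))"
proof (rule struc.equality)
  have "farity Lm = farity L" using assms unfolding relational_expansion_def by simp
  then show "fint (reduct Lm (chain_union L I A)) = fint (chain_union Lm I (\<lambda>i. reduct Lm (A i)))"
    by (simp add: chain_union_def)
qed (auto simp: sdom_chain_union rint_chain_union fun_eq_iff)

lemma reduct_in_restr_class: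
  assumes "relational_expansion Lm L" "A \<in> K" "is_struc L A"
  shows "reduct Lm A \<in> restr_class Lm K"
proof -
  have "is_struc Lm (reduct Lm A)" using is_struc_reduct assms(1,3) .
  moreover then have "isomorphism Lm id (reduct Lm A) (reduct Lm A)"
    unfolding isomorphism_def embedding_def by simp
  ultimately show ?thesis using assms(2) unfolding restr_class_def by blast
qed

lemma gen_closure_mono:
  assumes "X \<subseteq> Y"
  shows "gen_closure L A X \<subseteq> gen_closure L A Y"
proof
  fix x assume "x \<in> gen_closure L A X"
  then show "x \<in> gen_closure L A Y"
  proof induction
    case (base x)
    then show ?case using assms by (blast intro: gen_closure.base)
  next
    case (app f xs)
    then show ?case by (simp add: gen_closure.app)
  qed
qed

lemma gen_closure_substruc:
  assumes "lang_wf L" "substruc L A B"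
  shows "gen_closure L A X \<subseteq> gen_closure L B X"
proof
  fix x assume "x \<in> gen_closure L A X"
  then show "x \<in> gen_closure L B X"
  proof induction
    case (app f xs)
    have "set (farity L f) \<subseteq> lsorts L" using assms(1) app(1) unfolding lang_wf_def by blast
    then have "args_in B (farity L f) xs" using args_in_substruc assms(2) app(2) by blast
    moreover have "fint A f xs = fint B f xs" using assms(2) app(1,2) unfolding substruc_def by blast
    ultimately show ?case using gen_closure.app[OF app(1)] app(3) by auto
  qed (rule gen_closure.base)
qed

lemma gen_closure_subset_elems:
  assumes "lang_wf L" "is_struc L A" "X \<subseteq> elems L A"
  shows "gen_closure L A X \<subseteq> elems L A"
proof
  fix x assume "x \<in> gen_closure L A X"
  then show "x \<in> elems L A"
  proof induction
    case (app f xs)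
    then have "fint A f xs \<in> sdom A (fsort L f)" using assms(2) unfolding is_struc_def by blast
    moreover have "fsort L f \<in> lsorts L" using assms(1) app(1) unfolding lang_wf_def by blast
    ultimately show ?case unfolding elems_def by blast
  qed (use assms(3) in blast)
qed

lemma generated_by_chain_union:
  assumes "lang_wf L" "substruc_chain L I A" "is_struc L (chain_union L I A)"
    and "\<forall>i\<in>I. is_struc L (A i)" "\<forall>i\<in>I. generated_by L (A i) (X i)"
  shows "generated_by L (chain_union L I A) (\<Union>i\<in>I. X i)"
proof -
  let ?U = "chain_union L I A" and ?X = "\<Union>i\<in>I. X i"
  have elems_U: "elems L ?U = (\<Union>i\<in>I. elems L (A i))"
    unfolding elems_def sdom_chain_union by blast
  have "elems L (A i) \<subseteq> gen_closure L ?U ?X" if "i \<in> I" for i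
  proof -
    have "elems L (A i) = gen_closure L (A i) (X i)"
      using assms(5) that unfolding generated_by_def by blast
    also have "\<dots> \<subseteq> gen_closure L ?U (X i)"
      using gen_closure_substruc[OF assms(1) substruc_chain_union[OF assms(2,4,3) that]] .
    also have "\<dots> \<subseteq> gen_closure L ?U ?X"
      using that by (intro gen_closure_mono) blast
    finally show ?thesis .
  qed
  then have "elems L ?U \<subseteq> gen_closure L ?U ?X" unfolding elems_U by (rule UN_least)
  moreover have X: "?X \<subseteq> elems L ?U"
    using assms(5) unfolding elems_U generated_by_def by blast
  ultimately show ?thesis
    using gen_closure_subset_elems[OF assms(1,3) X] X unfolding generated_by_def by blast
qed

context
  includes cardinal_syntax
begin

lemma finite_card_of_ordLess_infinite:
  assumes "Card_order \<kappa>" "infinite (Field \<kappa>)" "finite X"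
  shows "|X| <o \<kappa>"
proof -
  have "Well_order \<kappa>" using assms(1) by (simp add: card_order_on_well_order_on)
  moreover have "finite (Field (card_of X))" using assms(3) by (simp only: Field_card_of)
  ultimately show ?thesis using finite_ordLess_infinite[OF card_of_Well_order] assms(2) by blast
qed

lemma card_of_ordLeq_underS:
  assumes "Card_order \<kappa>" "|X| <o \<kappa>"
  obtains b where "b \<in> Field \<kappa>" "|X| \<le>o |underS \<kappa> b|"
proof -
  have W: "Well_order \<kappa>" using assms(1) by (simp add: card_order_on_well_order_on)
  obtain b where b: "b \<in> Field \<kappa>" "|X| =o Restr \<kappa> (underS \<kappa> b)"
    using ordLess_iff_ordIso_Restr[OF W card_of_Well_order] assms(2) by blast
  have "Field (Restr \<kappa> (underS \<kappa> b)) = underS \<kappa> b"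
    using W wo_rel.underS_ofilter Field_Restr_ofilter unfolding wo_rel_def by fastforce
  then have "|X| =o |underS \<kappa> b|" using card_of_cong[OF b(2)] by (simp add: Field_card_of)
  then show thesis using that b(1) ordIso_imp_ordLeq by blast
qed

lemma card_of_UN_ordLess_underS:
  assumes \<kappa>: "Card_order \<kappa>" "infinite (Field \<kappa>)" and I: "|I| <o \<kappa>" and a: "a \<in> Field \<kappa>"
    and X: "\<forall>i\<in>I. |X i| \<le>o |underS \<kappa> a|"
  shows "|\<Union>i\<in>I. X i| <o \<kappa>"
proof -
  let ?B = "I <+> underS \<kappa> a"
  have B: "|?B| <o \<kappa>"
    using card_of_Plus_ordLess_infinite_Field[OF \<kappa>(2,1) I card_of_underS[OF \<kappa>(1) a]] .
  show ?thesis
  proof (cases "finite ?B")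
    case True
    then have "\<forall>i\<in>I. finite (X i)" using X card_of_ordLeq_finite by auto
    moreover have "finite I" using True by simp
    ultimately show ?thesis using finite_card_of_ordLess_infinite[OF \<kappa>] by blast
  next
    case False
    have "\<forall>i\<in>I. |X i| \<le>o |?B|"
      using X card_of_Plus2[of "underS \<kappa> a" I] ordLeq_transitive by blast
    then have "|\<Union>i\<in>I. X i| \<le>o |?B|"
      using card_of_UNION_ordLeq_infinite[OF False card_of_Plus1] by blast
    then show ?thesis using B ordLeq_ordLess_trans by blast
  qed
qed

lemma le_cofinality_ordLeq:
  assumes "Card_order \<kappa>" "le_cofinality lam \<kappa>"
  shows "lam \<le>o \<kappa>"
proof -
  have "Refl \<kappa>" using assms(1) by (simp add: card_order_on_well_order_on wo_rel.REFL wo_rel_def)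
  then have "lam \<le>o |Field \<kappa>|"
    using assms(2) unfolding le_cofinality_def refl_on_def by blast
  then show ?thesis using card_of_Field_ordIso[OF assms(1)] ordLeq_ordIso_trans by blast
qed

lemma le_cofinality_underS_bound:
  assumes "Card_order \<kappa>" "le_cofinality lam \<kappa>" "|I| <o lam" "\<forall>i\<in>I. \<alpha> i \<in> Field \<kappa>"
  obtains a where "a \<in> Field \<kappa>" "\<forall>i\<in>I. underS \<kappa> (\<alpha> i) \<subseteq> underS \<kappa> a"
proof -
  have W: "wo_rel \<kappa>" using assms(1) by (simp add: card_order_on_well_order_on wo_rel_def)
  have "|\<alpha> ` I| <o lam" using ordLeq_ordLess_trans[OF card_of_image assms(3)] .
  then have "\<not> lam \<le>o |\<alpha> ` I|" by (rule not_ordLess_ordLeq)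
  moreover have "\<alpha> ` I \<subseteq> Field \<kappa>" using assms(4) by blast
  ultimately have "\<not> (\<forall>a\<in>Field \<kappa>. \<exists>b\<in>\<alpha> ` I. (a, b) \<in> \<kappa>)"
    using assms(2) unfolding le_cofinality_def by blast
  then obtain a where a: "a \<in> Field \<kappa>" "\<forall>i\<in>I. (a, \<alpha> i) \<notin> \<kappa>" by blast
  have "underS \<kappa> (\<alpha> i) \<subseteq> underS \<kappa> a" if "i \<in> I" for i
  proof -
    have "(\<alpha> i, a) \<in> \<kappa>"
      using wo_rel.in_notinI[OF W _ _ a(1)] a(2) assms(4) that by blast
    then show ?thesis by (rule underS_incr[OF wo_rel.TRANS[OF W] wo_rel.ANTISYM[OF W]])
  qed
  then show thesis using that a(1) by blast
qed

lemma card_of_UN_ordLess_le_cofinality: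
  assumes \<kappa>: "Card_order \<kappa>" "infinite (Field \<kappa>)" and cf: "le_cofinality lam \<kappa>"
    and I: "|I| <o lam" and X: "\<forall>i\<in>I. |X i| <o \<kappa>"
  shows "|\<Union>i\<in>I. X i| <o \<kappa>"
proof -
  have "\<exists>b. b \<in> Field \<kappa> \<and> |X i| \<le>o |underS \<kappa> b|" if "i \<in> I" for i
    using card_of_ordLeq_underS[OF \<kappa>(1), of "X i"] X that by blast
  then obtain \<alpha> where \<alpha>: "\<forall>i\<in>I. \<alpha> i \<in> Field \<kappa> \<and> |X i| \<le>o |underS \<kappa> (\<alpha> i)|"
    by metis
  then obtain a where a: "a \<in> Field \<kappa>" "\<forall>i\<in>I. underS \<kappa> (\<alpha> i) \<subseteq> underS \<kappa> a"
    using le_cofinality_underS_bound[OF \<kappa>(1) cf I] by blast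
  have "|I| <o \<kappa>" using ordLess_ordLeq_trans[OF I le_cofinality_ordLeq[OF \<kappa>(1) cf]] .
  moreover have "\<forall>i\<in>I. |X i| \<le>o |underS \<kappa> a|"
  proof
    fix i assume "i \<in> I"
    with \<alpha> a(2) have "|X i| \<le>o |underS \<kappa> (\<alpha> i)|" "underS \<kappa> (\<alpha> i) \<subseteq> underS \<kappa> a" by auto
    then show "|X i| \<le>o |underS \<kappa> a|" using ordLeq_transitive card_of_mono1 by metis
  qed
  ultimately show ?thesis by (rule card_of_UN_ordLess_underS[OF \<kappa> _ a(1)])
qed

end

lemma lt_generated_chain_union:
  assumes "lang_wf L" "infinite_cardinal \<kappa>" "le_cofinality lam \<kappa>" "ordLess2 (card_of I) lam"
    and "substruc_chain L I A" "is_struc L (chain_union L I A)" "\<forall>i\<in>I. is_struc L (A i)"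
    and "\<forall>i\<in>I. lt_generated L \<kappa> (A i)"
  shows "lt_generated L \<kappa> (chain_union L I A)"
proof -
  obtain X where X: "\<forall>i\<in>I. ordLess2 (card_of (X i)) \<kappa> \<and> generated_by L (A i) (X i)"
    using bchoice[OF assms(8)[unfolded lt_generated_def]] by blast
  have "ordLess2 (card_of (\<Union>i\<in>I. X i)) \<kappa>"
    using card_of_UN_ordLess_le_cofinality[OF _ _ assms(3,4)] assms(2) X
    unfolding infinite_cardinal_def by blast
  moreover have "generated_by L (chain_union L I A) (\<Union>i\<in>I. X i)"
    using generated_by_chain_union[OF assms(1,5,6,7)] X by blast
  ultimately show ?thesis unfolding lt_generated_def by blast
qed

lemma args_in_empty:
  assumes "\<forall>s. sdom E s = {}"
  shows "args_in E ss xs \<longleftrightarrow> ss = [] \<and> xs = []"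
  using assms unfolding args_in_def by (cases xs) (auto, metis zero_less_Suc)

text \<open>The empty tuple generates E, and axiom (a) of Fr_\<kappa> for it forces M to agree with E
  on the 0-ary relation symbols; E interprets no function symbol, its domains being empty.\<close>

lemma models_Fr_empty_substruc:
  fixes \<kappa> :: "'k rel"
  assumes "lang_wf L" "infinite_cardinal \<kappa>" "models_Fr L \<kappa> K M" "is_struc L M"
    and "E \<in> K" "is_struc L E" "\<forall>s. sdom E s = {}"
  shows "substruc L E M"
proof -
  let ?a = "\<lambda>_::'k. undefined"
  have "elems L E = {}" using assms(7) unfolding elems_def by simp
  then have "generated_by L E (?a ` {})"
    using gen_closure_subset_elems[OF assms(1,6)] unfolding generated_by_def by auto
  moreover have "ordLess2 (card_of ({}::'k set)) \<kappa>"
    using assms(2) finite_card_of_ordLess_infinite unfolding infinite_cardinal_def by blast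
  ultimately obtain m where m: "realizes L {} E ?a M m"
    using assms(3,5) unfolding models_Fr_def by blast
  show ?thesis
    unfolding substruc_def
  proof (intro conjI ballI allI impI)
    show "fint E f xs = fint M f xs" if "f \<in> lfuns L" "args_in E (farity L f) xs" for f xs
    proof -
      have "fint E f xs \<in> sdom E (fsort L f)" using assms(6) that unfolding is_struc_def by blast
      then show ?thesis using assms(7) by simp
    qed
    show "xs \<in> rint E r \<longleftrightarrow> xs \<in> rint M r" if "r \<in> lrels L" "args_in E (rarity L r) xs" for r xs
    proof -
      have "xs = []" "rarity L r = []" using that(2) args_in_empty[OF assms(7)] by auto
      then have "atomic_wf L (\<lambda>v. sort_of L E (?a v)) {} (Rel r [])" using that(1) by simp
      then have "holds E ?a (Rel r []) \<longleftrightarrow> holds M m (Rel r [])"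
        using m unfolding realizes_def by blast
      then show ?thesis using \<open>xs = []\<close> by simp
    qed
  qed (use assms(4,6,7) in auto)
qed

lemma reduct_chain_union_substruc:
  assumes "lang_wf L" "relational_expansion Lm L" "infinite_cardinal \<kappa>"
    and "models_Fr Lm \<kappa> (restr_class Lm K) M" "is_struc Lm M"
    and "substruc_chain L I A" "chain_union L I A \<in> K" "is_struc L (chain_union L I A)"
    and "\<forall>i\<in>I. substruc Lm (reduct Lm (A i)) M"
  shows "substruc Lm (reduct Lm (chain_union L I A)) M"
proof -
  have Lm: "lang_wf Lm" using lang_wf_relational_expansion assms(1,2) .
  have U: "is_struc Lm (reduct Lm (chain_union L I A))" using is_struc_reduct assms(2,8) .
  show ?thesis
  proof (cases "I = {}")
    case True
    show ?thesis
      using models_Fr_empty_substruc[OF Lm assms(3,4,5) reduct_in_restr_class[OF assms(2,7,8)] U]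
      by (simp add: True sdom_chain_union)
  next
    case False
    show ?thesis
      using chain_union_substruc[OF Lm substruc_chain_reduct[OF assms(2,6)] False] U assms(9)
      unfolding reduct_chain_union[OF assms(2)] by blast
  qed
qed

theorem proposition3p2:
  fixes L Lm :: "('s, 'f, 'r) lang"
    and K :: "('s, 'f, 'r, 'u) struc set"
    and M :: "('s, 'f, 'r, 'u) struc"
    and \<kappa> :: "'k rel"
    and lam :: "'l rel"
  assumes "lang_wf L"
    and "relational_expansion Lm L"
    and "age L K"
    and "strong_fraisse_class L K"
    and "strong_fraisse_class Lm (restr_class Lm K)"
    and "infinite_cardinal \<kappa>"
    and "is_struc Lm M"
    and "models_Fr Lm \<kappa> (restr_class Lm K) M"
    and "Card_order lam"
    and "le_cofinality lam \<kappa>"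
    and "closed_lt_unions L lam K"
  shows "\<forall>(\<gamma>::'l rel) A. Well_order \<gamma> \<and> ordLess2 \<gamma> lam \<and> (\<forall>i\<in>Field \<gamma>. A i \<in> Fn L Lm K M \<kappa>)
            \<and> is_chain L \<gamma> A
           \<longrightarrow> (\<exists>B\<in>Fn L Lm K M \<kappa>. \<forall>i\<in>Field \<gamma>. substruc L (A i) B)"
proof (intro allI impI, elim conjE)
  fix \<gamma> :: "'l rel" and A :: "'l \<Rightarrow> ('s, 'f, 'r, 'u) struc"
  assume \<gamma>: "Well_order \<gamma>" "ordLess2 \<gamma> lam" and A: "\<forall>i\<in>Field \<gamma>. A i \<in> Fn L Lm K M \<kappa>"
    and chain: "is_chain L \<gamma> A"
  let ?U = "chain_union L (Field \<gamma>) A"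
  have AK: "\<forall>i\<in>Field \<gamma>. A i \<in> K \<and> is_struc L (A i)"
    "\<forall>i\<in>Field \<gamma>. lt_generated L \<kappa> (A i) \<and> substruc Lm (reduct Lm (A i)) M"
    using A assms(3) unfolding Fn_def over_def lt_gen_class_def age_def by auto
  have chain': "substruc_chain L (Field \<gamma>) A" using substruc_chain_Field[OF \<gamma>(1) chain] .
  have short: "ordLess2 (card_of (Field \<gamma>)) lam"
    using ordLeq_ordLess_trans[OF card_of_least \<gamma>(2)] \<gamma>(1) by blast
  have "?U \<in> K" using assms(11) \<gamma> AK(1) chain unfolding closed_lt_unions_def by blast
  moreover have U: "is_struc L ?U" using calculation assms(3) unfolding age_def by blast
  moreover have "lt_generated L \<kappa> ?U"
    using lt_generated_chain_union[OF assms(1,6,10) short chain' U] AK by blast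
  moreover have "substruc Lm (reduct Lm ?U) M"
    using reduct_chain_union_substruc[OF assms(1,2,6,8,7) chain' _ U] calculation(1) AK(2) by blast
  ultimately have "?U \<in> Fn L Lm K M \<kappa>" unfolding Fn_def over_def lt_gen_class_def by blast
  then show "\<exists>B\<in>Fn L Lm K M \<kappa>. \<forall>i\<in>Field \<gamma>. substruc L (A i) B"
    using substruc_chain_union[OF chain'] AK(1) U by blast
qed

end
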